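(* Let $\Omega\subset\mathbb{R}^d$ ($d\in\{2,3\}$) be a domain with a Cartesian (axis-aligned) mesh $\mathcal{T}_h$ of $\Omega$ into boxes, let $\mathcal{F}_h$ be the set of its interior and boundary faces, and let $V_h$ be the discontinuous finite element space of functions whose restriction to each cell $K\in\mathcal{T}_h$ lies in $\mathbb{Q}_k$ ($k\ge 1$). Let $a_h$ be the symmetric interior penalty bilinear form $$a_h(u,v)=\sum_{K\in\mathcal{T}_h}\int_K\nabla u\cdot\nabla v\,dx+\sum_{F\in\mathcal{F}_h}\int_F\Big(\gamma_F\,[\![u]\!]\cdot[\![v]\!]-\{\nabla u\}\cdot[\![v]\!]-[\![u]\!]\cdot\{\nabla v\}\Big)\,d\sigma,$$ with any penalty values $\gamma_F>0$. Let $P_j$ be a vertex patch, i.e. the union of the cells of $\mathcal{T}_h$ sharing a given mesh vertex, and define $$V_j=\{v\in V_h:\ v=0 \text{ on every cell not contained in } P_j,\ \text{and on each cell } K\subset P_j,\ v|_K=0 \text{ and } \partial_n (v|_K)=0 \text{ on } \partial K\cap\partial P_j\},$$ where $\partial_n$ is the derivative in the direction normal to the face. Then for all $u,w\in V_h$ with $u|_K=w|_K$ for every cell $K\subset P_j$, and for all $v\in V_j$, one has $a_h(u,v)=a_h(w,v)$. In other words, the residual $b-Au$ tested against $V_j$ depends only on the values of $u$ on the cells of the patch $P_j$.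
   Context: Jumps and averages: on an interior face $F$ shared by cells $K^+$ and $K^-$ with outward unit normals $n^+$, $n^-=-n^+$ and traces $u^\pm$, set $\{u\}=\tfrac12(u^++u^-)$, $\{\nabla u\}=\tfrac12(\nabla u^++\nabla u^-)$ and $[\![u]\!]=u^+n^++u^-n^-$. On a boundary face (on $\partial\Omega$) with interior trace $u$ and outward normal $n$, set $\{\nabla u\}=\nabla u$ and $[\![u]\!]=u\,n$. $\mathbb{Q}_k$ denotes tensor-product polynomials of degree at most $k$ in each coordinate. The matrix $A$ represents $a_h$ in a basis of $V_h$ and $b$ is a right-hand side vector. *)

theory Defs
  imports "HOL-Analysis.Analysis"
begin

text \<open>Cartesian mesh: a tensor-product grid in each direction i given by strictly increasing
grid lines t i :: int \<Rightarrow> real; cells are indexed by integer multi-indices m :: 'n \<Rightarrow> int;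
the mesh is a finite set M of multi-indices.\<close>

definition cell :: "('n::finite \<Rightarrow> int \<Rightarrow> real) \<Rightarrow> ('n \<Rightarrow> int) \<Rightarrow> (real^'n) set" where
  "cell t m = cbox (\<chi> i. t i (m i)) (\<chi> i. t i (m i + 1))"

definition shift :: "('n \<Rightarrow> int) \<Rightarrow> 'n \<Rightarrow> ('n \<Rightarrow> int)" where
  "shift m i = m(i := m i + 1)"

definition Qk :: "nat \<Rightarrow> (real^'n::finite \<Rightarrow> real) set" where
  "Qk k = {f. \<exists>c :: ('n \<Rightarrow> nat) \<Rightarrow> real.
             f = (\<lambda>x. \<Sum>\<alpha>\<in>{\<alpha>. \<forall>i. \<alpha> i \<le> k}. c \<alpha> * (\<Prod>i\<in>UNIV. (x $ i) ^ (\<alpha> i)))}"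

text \<open>Discrete functions: one polynomial per cell (values outside M are irrelevant).\<close>
definition Vh :: "nat \<Rightarrow> ('n::finite \<Rightarrow> int) set \<Rightarrow> (('n \<Rightarrow> int) \<Rightarrow> real^'n \<Rightarrow> real) set" where
  "Vh k M = {u. \<forall>m\<in>M. u m \<in> Qk k}"

definition partial :: "(real^'n::finite \<Rightarrow> real) \<Rightarrow> 'n \<Rightarrow> real^'n \<Rightarrow> real" where
  "partial f i x = deriv (\<lambda>s. f (x + s *\<^sub>R axis i 1)) 0"

definition grad :: "(real^'n::finite \<Rightarrow> real) \<Rightarrow> real^'n \<Rightarrow> real^'n" where
  "grad f x = (\<chi> i. partial f i x)"

text \<open>Faces: (m,i) is the face orthogonal to e_i between cell m (below, outward normal e_i)
and cell shift m i (above, outward normal -e_i); it belongs to the mesh iff at least one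
of the two cells is in M (boundary face iff exactly one is).\<close>
definition faces :: "('n::finite \<Rightarrow> int) set \<Rightarrow> (('n \<Rightarrow> int) \<times> 'n) set" where
  "faces M = {(m, i). m \<in> M \<or> shift m i \<in> M}"

definition jump :: "('n::finite \<Rightarrow> int) set \<Rightarrow> (('n \<Rightarrow> int) \<Rightarrow> real^'n \<Rightarrow> real)
                     \<Rightarrow> ('n \<Rightarrow> int) \<Rightarrow> 'n \<Rightarrow> real^'n \<Rightarrow> real^'n" where
  "jump M u m i x =
     (if m \<in> M then u m x *\<^sub>R axis i 1 else 0) +
     (if shift m i \<in> M then u (shift m i) x *\<^sub>R (- axis i 1) else 0)"

definition avg_grad :: "('n::finite \<Rightarrow> int) set \<Rightarrow> (('n \<Rightarrow> int) \<Rightarrow> real^'n \<Rightarrow> real)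
                     \<Rightarrow> ('n \<Rightarrow> int) \<Rightarrow> 'n \<Rightarrow> real^'n \<Rightarrow> real^'n" where
  "avg_grad M u m i x =
     (if m \<in> M \<and> shift m i \<in> M then (1/2) *\<^sub>R (grad (u m) x + grad (u (shift m i)) x)
      else if m \<in> M then grad (u m) x else grad (u (shift m i)) x)"

text \<open>Surface integral over the face (m,i): the face lies in the hyperplane
x_i = t i (m i + 1); we integrate g restricted to the hyperplane over the (d-1)-box,
realised as a d-dimensional integral over the box thickened to [0,1] in direction i
(the integrand being constant in x_i), which equals the (d-1)-dimensional integral.\<close>
definition face_int :: "('n::finite \<Rightarrow> int \<Rightarrow> real) \<Rightarrow> ('n \<Rightarrow> int) \<Rightarrow> 'n
                         \<Rightarrow> (real^'n \<Rightarrow> real) \<Rightarrow> real" where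
  "face_int t m i g =
     integral (cbox (\<chi> j. if j = i then 0 else t j (m j)) (\<chi> j. if j = i then 1 else t j (m j + 1)))
              (\<lambda>x. g (\<chi> j. if j = i then t i (m i + 1) else x $ j))"

definition a_h :: "('n::finite \<Rightarrow> int \<Rightarrow> real) \<Rightarrow> ('n \<Rightarrow> int) set \<Rightarrow> ((('n \<Rightarrow> int) \<times> 'n) \<Rightarrow> real)
                  \<Rightarrow> (('n \<Rightarrow> int) \<Rightarrow> real^'n \<Rightarrow> real) \<Rightarrow> (('n \<Rightarrow> int) \<Rightarrow> real^'n \<Rightarrow> real) \<Rightarrow> real" where
  "a_h t M \<gamma> u v =
     (\<Sum>m\<in>M. integral (cell t m) (\<lambda>x. grad (u m) x \<bullet> grad (v m) x)) +
     (\<Sum>(m, i)\<in>faces M. face_int t m i (\<lambda>x.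
         \<gamma> (m, i) * (jump M u m i x \<bullet> jump M v m i x)
         - avg_grad M u m i x \<bullet> jump M v m i x
         - jump M u m i x \<bullet> avg_grad M v m i x))"

text \<open>Vertex patch around the grid vertex with index q (point (t i (q i))_i):
the cells of M having this point as a vertex.\<close>
definition patch_cells :: "('n::finite \<Rightarrow> int) set \<Rightarrow> ('n \<Rightarrow> int) \<Rightarrow> ('n \<Rightarrow> int) set" where
  "patch_cells M q = {m \<in> M. \<forall>i. m i = q i - 1 \<or> m i = q i}"

definition patch :: "('n::finite \<Rightarrow> int \<Rightarrow> real) \<Rightarrow> ('n \<Rightarrow> int) set \<Rightarrow> ('n \<Rightarrow> int) \<Rightarrow> (real^'n) set" where
  "patch t M q = (\<Union>m\<in>patch_cells M q. cell t m)"

definition cell_face :: "('n::finite \<Rightarrow> int \<Rightarrow> real) \<Rightarrow> ('n \<Rightarrow> int) \<Rightarrow> 'n \<Rightarrow> real \<Rightarrow> (real^'n) set" where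
  "cell_face t m i c = {x \<in> cell t m. x $ i = c}"

definition Vj :: "nat \<Rightarrow> ('n::finite \<Rightarrow> int \<Rightarrow> real) \<Rightarrow> ('n \<Rightarrow> int) set \<Rightarrow> ('n \<Rightarrow> int)
                  \<Rightarrow> (('n \<Rightarrow> int) \<Rightarrow> real^'n \<Rightarrow> real) set" where
  "Vj k t M q = {v \<in> Vh k M.
      (\<forall>m\<in>M - patch_cells M q. \<forall>x\<in>cell t m. v m x = 0) \<and>
      (\<forall>m\<in>patch_cells M q. \<forall>i. \<forall>c\<in>{t i (m i), t i (m i + 1)}.
          cell_face t m i c \<subseteq> frontier (patch t M q) \<longrightarrow>
          (\<forall>x\<in>cell_face t m i c. v m x = 0 \<and> partial (v m) i x = 0))}"

end

theory Submission
  imports Defs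
begin

text \<open>Every term of \<open>a_h u v\<close> is an integral over a cell or a face of pointwise
expressions in the traces of \<open>u\<close>, \<open>\<nabla>u\<close>, \<open>v\<close>, \<open>\<nabla>v\<close>. Since polynomials agreeing on a
cell have equal gradients there (even on its boundary, by one-sided difference quotients),
\<open>u\<close> and \<open>w\<close> have the same traces on patch cells, while \<open>v\<close> and \<open>\<nabla>v\<close> vanish on all other
cells. On a face between a patch cell and an outside cell, the face lies on the patch
boundary, so the conditions defining \<open>V\<^sub>j\<close> make the jump of \<open>v\<close> and the normal part of
\<open>{\<nabla>v}\<close> vanish there; these are the only places where the outside traces of \<open>u\<close> enter.\<close>

lemma deriv_eq_if_eq_on_interval:
  fixes f g :: "real \<Rightarrow> real"
  assumes "f differentiable (at x)" "g differentiable (at x)"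
    and "a < b" "x \<in> {a..b}" "\<And>s. s \<in> {a..b} \<Longrightarrow> f s = g s"
  shows "deriv f x = deriv g x"
proof (rule has_field_derivative_unique)
  have "(f has_field_derivative deriv f x) (at x within {a..b})"
    using assms(1) by (simp add: DERIV_deriv_iff_real_differentiable has_field_derivative_at_within)
  then show "(g has_field_derivative deriv f x) (at x within {a..b})"
    using assms(4,5) by (rule has_field_derivative_transform_within[OF _ zero_less_one])
  show "(g has_field_derivative deriv g x) (at x within {a..b})"
    using assms(2) by (simp add: DERIV_deriv_iff_real_differentiable has_field_derivative_at_within)
  show "at x within {a..b} \<noteq> bot"
    using assms(3,4) by (simp add: trivial_limit_within)
qed

lemma differentiable_prod:
  fixes f :: "'i \<Rightarrow> real \<Rightarrow> real"
  assumes "finite A" "\<And>a. a \<in> A \<Longrightarrow> f a differentiable (at s)"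
  shows "(\<lambda>x. \<Prod>a\<in>A. f a x) differentiable (at s)"
  using assms by (induction A rule: finite_induct) auto

lemma finite_bounded_multi_indices: "finite {\<alpha>::'n::finite \<Rightarrow> nat. \<forall>i. \<alpha> i \<le> k}"
proof -
  have "{\<alpha>::'n \<Rightarrow> nat. \<forall>i. \<alpha> i \<le> k} = PiE UNIV (\<lambda>_. {..k})"
    by (auto simp: PiE_UNIV_domain)
  then show ?thesis by (simp add: finite_PiE)
qed

lemma Qk_differentiable_along_axis:
  fixes x :: "real^'n::finite"
  assumes "f \<in> Qk k"
  shows "(\<lambda>s. f (x + s *\<^sub>R axis i 1)) differentiable (at s0)"
proof -
  obtain c where f: "f = (\<lambda>x. \<Sum>\<alpha>\<in>{\<alpha>. \<forall>i. \<alpha> i \<le> k}. c \<alpha> * (\<Prod>i\<in>UNIV. (x $ i) ^ (\<alpha> i)))"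
    using assms unfolding Qk_def by blast
  have coordinate: "(\<lambda>s. (x + s *\<^sub>R axis i 1) $ j) differentiable (at s0)" for j
    by (simp add: axis_def)
  show ?thesis unfolding f
    by (intro differentiable_sum finite_bounded_multi_indices differentiable_mult
        differentiable_const differentiable_prod finite_class.finite_UNIV differentiable_power
        coordinate ballI)
qed

lemma partial_eq_on_cell:
  fixes f g :: "real^'n::finite \<Rightarrow> real"
  assumes grid: "strict_mono (t i)" and "f \<in> Qk k" "g \<in> Qk k'"
    and fg: "\<And>y. y \<in> cell t m \<Longrightarrow> f y = g y" and x: "x \<in> cell t m"
  shows "partial f i x = partial g i x"
  unfolding partial_def
proof (rule deriv_eq_if_eq_on_interval)
  show "(\<lambda>s. f (x + s *\<^sub>R axis i 1)) differentiable (at 0)"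
    using assms(2) by (rule Qk_differentiable_along_axis)
  show "(\<lambda>s. g (x + s *\<^sub>R axis i 1)) differentiable (at 0)"
    using assms(3) by (rule Qk_differentiable_along_axis)
  show "t i (m i) - x $ i < t i (m i + 1) - x $ i"
    using grid by (simp add: strict_mono_def)
  show "0 \<in> {t i (m i) - x $ i .. t i (m i + 1) - x $ i}"
    using x by (simp add: cell_def mem_box_cart)
  fix s assume "s \<in> {t i (m i) - x $ i .. t i (m i + 1) - x $ i}"
  with x have "x + s *\<^sub>R axis i 1 \<in> cell t m"
    by (auto simp: cell_def mem_box_cart axis_def)
  then show "f (x + s *\<^sub>R axis i 1) = g (x + s *\<^sub>R axis i 1)" by (rule fg)
qed

lemma grad_eq_on_cell:
  fixes f g :: "real^'n::finite \<Rightarrow> real"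
  assumes "\<And>i. strict_mono (t i)" "f \<in> Qk k" "g \<in> Qk k'"
    and "\<And>y. y \<in> cell t m \<Longrightarrow> f y = g y" "x \<in> cell t m"
  shows "grad f x = grad g x"
  using partial_eq_on_cell[OF assms] by (simp add: grad_def vec_eq_iff)

lemma zero_in_Qk: "(\<lambda>_. 0) \<in> Qk k"
  unfolding Qk_def by (intro CollectI exI[of _ "\<lambda>_. 0"]) simp

lemma grad_zero: "grad (\<lambda>_. 0) x = 0"
  by (simp add: grad_def partial_def vec_eq_iff)

lemma frontier_if_inner_max:
  fixes S :: "'a::real_inner set"
  assumes "y \<in> S" "a \<noteq> 0" "\<And>z. z \<in> S \<Longrightarrow> a \<bullet> z \<le> a \<bullet> y"
  shows "y \<in> frontier S"
proof -
  have "y \<notin> interior S"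
  proof
    assume "y \<in> interior S"
    then obtain e where e: "e > 0" "ball y e \<subseteq> S"
      using mem_interior by blast
    define z where "z = y + (e / (2 * norm a)) *\<^sub>R a"
    have "dist y z < e"
      using e assms(2) by (simp add: z_def dist_norm)
    then have "a \<bullet> z \<le> a \<bullet> y"
      using e by (intro assms(3)) auto
    moreover have "a \<bullet> z = a \<bullet> y + e * norm a / 2"
      using assms(2) by (simp add: z_def inner_add_right power2_norm_eq_inner[symmetric] power2_eq_square)
    moreover have "e * norm a > 0"
      using e assms(2) by simp
    ultimately show False
      by simp
  qed
  then show ?thesis
    using assms(1) closure_subset by (auto simp: frontier_def)
qed

lemma patch_component_bounds:
  assumes grid: "mono (t i)" and z: "z \<in> patch t M q"
  shows "t i (q i - 1) \<le> z $ i" "z $ i \<le> t i (q i + 1)"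
proof -
  obtain m where m: "m \<in> patch_cells M q" "z \<in> cell t m"
    using z unfolding patch_def by auto
  then have "m i = q i - 1 \<or> m i = q i"
    unfolding patch_cells_def by blast
  then have "q i - 1 \<le> m i" "m i + 1 \<le> q i + 1"
    by auto
  then have "t i (q i - 1) \<le> t i (m i)" "t i (m i + 1) \<le> t i (q i + 1)"
    using grid by (auto simp: mono_def)
  moreover have "t i (m i) \<le> z $ i" "z $ i \<le> t i (m i + 1)"
    using m(2) by (simp_all add: cell_def mem_box_cart)
  ultimately show "t i (q i - 1) \<le> z $ i" "z $ i \<le> t i (q i + 1)"
    by linarith+
qed

lemma upper_cell_face_in_patch_frontier:
  assumes grid: "mono (t i)" and m: "m \<in> patch_cells M q" "m i = q i"
  shows "cell_face t m i (t i (m i + 1)) \<subseteq> frontier (patch t M q)"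
proof
  fix y assume y: "y \<in> cell_face t m i (t i (m i + 1))"
  show "y \<in> frontier (patch t M q)"
  proof (rule frontier_if_inner_max)
    show "y \<in> patch t M q"
      using y m unfolding cell_face_def patch_def by auto
    show "axis i 1 \<bullet> z \<le> axis i 1 \<bullet> y" if "z \<in> patch t M q" for z
      using patch_component_bounds(2)[OF grid that] y m(2)
      by (simp add: cell_face_def inner_axis')
  qed (simp add: axis_eq_0_iff)
qed

lemma lower_cell_face_in_patch_frontier:
  assumes grid: "mono (t i)" and m: "m \<in> patch_cells M q" "m i = q i - 1"
  shows "cell_face t m i (t i (m i)) \<subseteq> frontier (patch t M q)"
proof
  fix y assume y: "y \<in> cell_face t m i (t i (m i))"
  show "y \<in> frontier (patch t M q)"
  proof (rule frontier_if_inner_max)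
    show "y \<in> patch t M q"
      using y m unfolding cell_face_def patch_def by auto
    show "(- axis i 1) \<bullet> z \<le> (- axis i 1) \<bullet> y" if "z \<in> patch t M q" for z
      using patch_component_bounds(1)[OF grid that] y m(2)
      by (simp add: cell_face_def inner_axis')
  qed (simp add: axis_eq_0_iff)
qed

lemma patch_cells_subset: "patch_cells M q \<subseteq> M"
  by (auto simp: patch_cells_def)

lemma shift_apply: "shift m i j = (if j = i then m i + 1 else m j)"
  by (simp add: shift_def)

lemma shift_leaves_patch_cells:
  assumes "m \<in> patch_cells M q" "shift m i \<in> M - patch_cells M q"
  shows "m i = q i"
proof -
  have near: "m j = q j - 1 \<or> m j = q j" for j
    using assms(1) unfolding patch_cells_def by blast
  obtain j where j: "\<not> (shift m i j = q j - 1 \<or> shift m i j = q j)"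
    using assms(2) unfolding patch_cells_def by auto
  with near[of j] have "j = i"
    by (auto simp: shift_apply split: if_splits)
  with j near[of i] show ?thesis
    by (simp add: shift_apply)
qed

lemma shift_enters_patch_cells:
  assumes "shift m i \<in> patch_cells M q" "m \<in> M - patch_cells M q"
  shows "shift m i i = q i - 1"
proof -
  have near: "shift m i j = q j - 1 \<or> shift m i j = q j" for j
    using assms(1) unfolding patch_cells_def by blast
  obtain j where j: "\<not> (m j = q j - 1 \<or> m j = q j)"
    using assms(2) unfolding patch_cells_def by auto
  with near[of j] have "j = i"
    by (auto simp: shift_apply split: if_splits)
  with j near[of i] show ?thesis
    by (simp add: shift_apply)
qed

lemma Vj_vanishes_off_patch:
  assumes grid: "\<And>i. strict_mono (t i)" and v: "v \<in> Vj k t M q"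
    and m: "m \<in> M - patch_cells M q" and x: "x \<in> cell t m"
  shows "v m x = 0 \<and> grad (v m) x = 0"
proof -
  have zero: "\<And>y. y \<in> cell t m \<Longrightarrow> v m y = 0"
    using v m unfolding Vj_def by blast
  have "v m \<in> Qk k"
    using v m unfolding Vj_def Vh_def by blast
  with grid have "grad (v m) x = grad (\<lambda>_. 0) x"
    using zero_in_Qk zero x by (rule grad_eq_on_cell)
  then show ?thesis
    using zero[OF x] by (simp add: grad_zero)
qed

lemma Vj_trace_vanishes_upper:
  assumes grid: "mono (t i)" and v: "v \<in> Vj k t M q"
    and m: "m \<in> patch_cells M q" "shift m i \<in> M - patch_cells M q"
    and y: "y \<in> cell_face t m i (t i (m i + 1))"
  shows "v m y = 0 \<and> grad (v m) y $ i = 0"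
proof -
  have "cell_face t m i (t i (m i + 1)) \<subseteq> frontier (patch t M q)"
    using grid m(1) shift_leaves_patch_cells[OF m] by (rule upper_cell_face_in_patch_frontier)
  moreover have "\<forall>c\<in>{t i (m i), t i (m i + 1)}. cell_face t m i c \<subseteq> frontier (patch t M q) \<longrightarrow>
      (\<forall>x\<in>cell_face t m i c. v m x = 0 \<and> partial (v m) i x = 0)"
    using v m(1) unfolding Vj_def by blast
  ultimately show ?thesis
    using y by (simp add: grad_def)
qed

lemma Vj_trace_vanishes_lower:
  assumes grid: "mono (t i)" and v: "v \<in> Vj k t M q"
    and m: "shift m i \<in> patch_cells M q" "m \<in> M - patch_cells M q"
    and y: "y \<in> cell_face t (shift m i) i (t i (m i + 1))"
  shows "v (shift m i) y = 0 \<and> grad (v (shift m i)) y $ i = 0"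
proof -
  have i: "shift m i i = m i + 1"
    by (simp add: shift_apply)
  have "cell_face t (shift m i) i (t i (shift m i i)) \<subseteq> frontier (patch t M q)"
    using grid m(1) shift_enters_patch_cells[OF m] by (rule lower_cell_face_in_patch_frontier)
  moreover have "\<forall>c\<in>{t i (shift m i i), t i (shift m i i + 1)}.
      cell_face t (shift m i) i c \<subseteq> frontier (patch t M q) \<longrightarrow>
      (\<forall>x\<in>cell_face t (shift m i) i c. v (shift m i) x = 0 \<and> partial (v (shift m i)) i x = 0)"
    using v m(1) unfolding Vj_def by blast
  ultimately show ?thesis
    using y by (simp add: grad_def i)
qed

lemma face_int_cong:
  assumes grid: "mono (t i)"
    and fg: "\<And>y. y \<in> cell_face t m i (t i (m i + 1)) \<Longrightarrow>
      y \<in> cell_face t (shift m i) i (t i (m i + 1)) \<Longrightarrow> f y = g y"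
  shows "face_int t m i f = face_int t m i g"
  unfolding face_int_def
proof (rule integral_cong)
  fix x
  assume x: "x \<in> cbox (\<chi> j. if j = i then 0 else t j (m j)) (\<chi> j. if j = i then 1 else t j (m j + 1))"
  define y where "y = (\<chi> j. if j = i then t i (m i + 1) else x $ j)"
  have y_j: "t j (m j) \<le> y $ j \<and> y $ j \<le> t j (m j + 1)" if "j \<noteq> i" for j
  proof -
    have "(\<chi> j. if j = i then 0 else t j (m j)) $ j \<le> x $ j \<and>
        x $ j \<le> (\<chi> j. if j = i then 1 else t j (m j + 1)) $ j"
      using x unfolding mem_box_cart by blast
    then show ?thesis
      using that by (simp add: y_def)
  qed
  have y_i: "y $ i = t i (m i + 1)"
    by (simp add: y_def)
  have "t i (m i) \<le> t i (m i + 1)" "t i (m i + 1) \<le> t i (m i + 1 + 1)"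
    using grid by (simp_all add: monoD)
  then have "t j (m j) \<le> y $ j \<and> y $ j \<le> t j (m j + 1)"
    and "t j (shift m i j) \<le> y $ j \<and> y $ j \<le> t j (shift m i j + 1)" for j
    using y_j[of j] by (cases "j = i"; simp add: y_i shift_def)+
  then have "y \<in> cell_face t m i (t i (m i + 1))"
    and "y \<in> cell_face t (shift m i) i (t i (m i + 1))"
    by (simp_all add: cell_face_def cell_def mem_box_cart y_i)
  then show "f y = g y" by (rule fg)
qed

lemma face_integrand_eq:
  fixes u w v :: "('n::finite \<Rightarrow> int) \<Rightarrow> real^'n \<Rightarrow> real" and y :: "real^'n"
  assumes sub: "P \<subseteq> M"
    and agree_below: "m \<in> P \<Longrightarrow> u m y = w m y \<and> grad (u m) y = grad (w m) y"
    and agree_above: "shift m i \<in> P \<Longrightarrow>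
      u (shift m i) y = w (shift m i) y \<and> grad (u (shift m i)) y = grad (w (shift m i)) y"
    and off_below: "m \<in> M - P \<Longrightarrow> v m y = 0 \<and> grad (v m) y = 0"
    and off_above: "shift m i \<in> M - P \<Longrightarrow> v (shift m i) y = 0 \<and> grad (v (shift m i)) y = 0"
    and trace_below: "m \<in> P \<Longrightarrow> shift m i \<in> M - P \<Longrightarrow> v m y = 0 \<and> grad (v m) y $ i = 0"
    and trace_above: "shift m i \<in> P \<Longrightarrow> m \<in> M - P \<Longrightarrow>
      v (shift m i) y = 0 \<and> grad (v (shift m i)) y $ i = 0"
  shows "g * (jump M u m i y \<bullet> jump M v m i y) - avg_grad M u m i y \<bullet> jump M v m i y
          - jump M u m i y \<bullet> avg_grad M v m i y =
         g * (jump M w m i y \<bullet> jump M v m i y) - avg_grad M w m i y \<bullet> jump M v m i y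
          - jump M w m i y \<bullet> avg_grad M v m i y"
  by (cases "m \<in> M"; cases "shift m i \<in> M"; cases "m \<in> P"; cases "shift m i \<in> P")
    (use sub agree_below agree_above off_below off_above trace_below trace_above
      in \<open>simp_all add: jump_def avg_grad_def subset_iff inner_axis inner_axis'
        inner_add_left inner_add_right inner_diff_left inner_diff_right\<close>)

lemma face_term_local:
  assumes grid: "\<And>i. strict_mono (t i)" and v: "v \<in> Vj k t M q"
    and agree: "\<And>m x. m \<in> patch_cells M q \<Longrightarrow> x \<in> cell t m \<Longrightarrow>
      u m x = w m x \<and> grad (u m) x = grad (w m) x"
  shows "face_int t m i (\<lambda>x. g * (jump M u m i x \<bullet> jump M v m i x)
            - avg_grad M u m i x \<bullet> jump M v m i x - jump M u m i x \<bullet> avg_grad M v m i x) =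
         face_int t m i (\<lambda>x. g * (jump M w m i x \<bullet> jump M v m i x)
            - avg_grad M w m i x \<bullet> jump M v m i x - jump M w m i x \<bullet> avg_grad M v m i x)"
proof (rule face_int_cong)
  show mono: "mono (t i)"
    using grid by (rule strict_mono_mono)
  fix y
  assume ym: "y \<in> cell_face t m i (t i (m i + 1))"
    and ys: "y \<in> cell_face t (shift m i) i (t i (m i + 1))"
  have cells: "y \<in> cell t m" "y \<in> cell t (shift m i)"
    using ym ys by (simp_all add: cell_face_def)
  show "g * (jump M u m i y \<bullet> jump M v m i y)
            - avg_grad M u m i y \<bullet> jump M v m i y - jump M u m i y \<bullet> avg_grad M v m i y =
         g * (jump M w m i y \<bullet> jump M v m i y)
            - avg_grad M w m i y \<bullet> jump M v m i y - jump M w m i y \<bullet> avg_grad M v m i y"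
    by (rule face_integrand_eq[OF patch_cells_subset])
      (use cells agree Vj_vanishes_off_patch[OF grid v] Vj_trace_vanishes_upper[OF mono v _ _ ym]
        Vj_trace_vanishes_lower[OF mono v _ _ ys] in blast)+
qed

theorem mainTheorem1:
  fixes t :: "'n::finite \<Rightarrow> int \<Rightarrow> real"
    and M :: "('n \<Rightarrow> int) set"
    and \<Omega> :: "(real^'n) set"
    and k :: nat
    and \<gamma> :: "(('n \<Rightarrow> int) \<times> 'n) \<Rightarrow> real"
    and q :: "'n \<Rightarrow> int"
    and u w v :: "('n \<Rightarrow> int) \<Rightarrow> real^'n \<Rightarrow> real"
  assumes dim: "CARD('n) = 2 \<or> CARD('n) = 3"
    and grid: "\<And>i. strict_mono (t i)"
    and mesh: "finite M" "M \<noteq> {}"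
    and dom: "\<Omega> = interior (\<Union>m\<in>M. cell t m)" "connected \<Omega>"
    and deg: "k \<ge> 1"
    and pen: "\<And>F. F \<in> faces M \<Longrightarrow> \<gamma> F > 0"
    and vertex: "patch_cells M q \<noteq> {}"
    and u: "u \<in> Vh k M" and w: "w \<in> Vh k M"
    and uw: "\<And>m x. m \<in> patch_cells M q \<Longrightarrow> x \<in> cell t m \<Longrightarrow> u m x = w m x"
    and v: "v \<in> Vj k t M q"
  shows "a_h t M \<gamma> u v = a_h t M \<gamma> w v"
proof -
  have agree: "u m x = w m x \<and> grad (u m) x = grad (w m) x"
    if m: "m \<in> patch_cells M q" and x: "x \<in> cell t m" for m x
  proof -
    have "u m \<in> Qk k" "w m \<in> Qk k"
      using u w m unfolding Vh_def patch_cells_def by auto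
    with grid show ?thesis
      using uw[OF m] x grad_eq_on_cell by blast
  qed
  have "integral (cell t m) (\<lambda>x. grad (u m) x \<bullet> grad (v m) x) =
        integral (cell t m) (\<lambda>x. grad (w m) x \<bullet> grad (v m) x)" if "m \<in> M" for m
    using that agree Vj_vanishes_off_patch[OF grid v]
    by (intro integral_cong) (cases "m \<in> patch_cells M q"; simp)
  then show ?thesis
    unfolding a_h_def using face_term_local[OF grid v agree]
    by (simp add: case_prod_unfold)
qed

end
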